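(* Let $A\in\mathbb{R}_{\max}^{n\times n}$ with $\lambda(A)=0$, let $g=g(\mathrm{crit}(A))$, assume $T_1(A)=\mathrm{DM}(g,n)$ and that $\mathrm{crit}(A)$ contains, up to choice of first node, a unique cycle $Z_0$ of length $g$. Let $i$ be a node of $Z_0$ and $j$ a node not in $Z_0$. Then in any interesting walk: (i) between any two consecutive occurrences of $i$ there is exactly one occurrence of $j$; (ii) there is exactly one occurrence of $j$ before the first occurrence of $i$ and exactly one occurrence of $j$ after the last occurrence of $i$.
   Context: Max-plus semiring $\mathbb{R}_{\max}=\mathbb{R}\cup\{-\infty\}$ with $a\oplus b=\max(a,b)$, $a\otimes b=a+b$; $(AB)_{ij}=\max_k(a_{ik}+b_{kj})$; $A^t$ is the $t$-th max-plus power, $A^0=I$. $\mathcal{D}(A)$ is the digraph on $\{1,\dots,n\}$ with arc $(i,j)$ of weight $a_{ij}$ whenever $a_{ij}\ne-\infty$. A walk is a node sequence whose consecutive pairs are arcs, its length is its number of arcs and its weight the sum of its arc weights; cycles are closed walks with no proper closed subwalk. $\lambda(A)$ is the maximal cycle mean. $\mathrm{crit}(A)$ is the subgraph of all nodes and arcs of cycles attaining $\lambda(A)$; its nodes are critical. $g(\mathrm{crit}(A))$ is the maximum over strongly connected components of $\mathrm{crit}(A)$ of their minimal cycle length. The cyclicity of $\mathrm{crit}(A)$ is the lcm over components of the gcd of their cycle lengths. CSR terms: with $\gamma$ the cyclicity of $\mathrm{crit}(A)$ and $\lambda(A)=0$, $M=I\oplus N\oplus\dots\oplus N^{n-1}$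 where $N=A^\gamma$: $c_{ij}=m_{ij}$ if $j$ critical, else $-\infty$; $r_{ij}=m_{ij}$ if $i$ critical, else $-\infty$; $s_{ij}=a_{ij}$ if $(i,j)$ is an arc of $\mathrm{crit}(A)$, else $-\infty$; $CS^tR[A]$ is the product $CS^tR$. $B_N$ has $(B_N)_{ij}=-\infty$ if $i$ or $j$ is critical and $a_{ij}$ otherwise. $T_1(A)$ is the least $T\ge0$ with $A^t=CS^tR[A]\oplus B_N^t$ for all $t\ge T$. $\mathrm{DM}(g,n)=g(n-2)+n$. Twice optimal / interesting walks: a walk $W$ from $i$ to $j$ passing through at least one node of $Z_0$ is twice optimal if it has maximal weight among all walks from $i$ to $j$ passing through a node of $Z_0$ whose length is congruent to the length of $W$ modulo $g$, and has minimal length among all such walks of maximal weight. It is interesting if it is twice optimal and has length $\mathrm{DM}(g,n)+g-1$. *)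

theory Defs
  imports Main "HOL-Library.Extended_Real"
begin

text \<open>Max-plus matrices over a finite node type 'n (n = CARD('n)); entries in ereal,
  where -\<infinity> is the max-plus zero. Entries +\<infinity> are excluded by hypothesis.\<close>

type_synonym 'n mpmat = "'n \<Rightarrow> 'n \<Rightarrow> ereal"

definition mp_mult :: "('n::finite) mpmat \<Rightarrow> 'n mpmat \<Rightarrow> 'n mpmat" where
  "mp_mult A B = (\<lambda>i j. Max (range (\<lambda>k. A i k + B k j)))"

definition mp_plus :: "('n::finite) mpmat \<Rightarrow> 'n mpmat \<Rightarrow> 'n mpmat" where
  "mp_plus A B = (\<lambda>i j. max (A i j) (B i j))"

definition mp_id :: "('n::finite) mpmat" where
  "mp_id = (\<lambda>i j. if i = j then 0 else -\<infinity>)"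

fun mp_pow :: "('n::finite) mpmat \<Rightarrow> nat \<Rightarrow> 'n mpmat" where
  "mp_pow A 0 = mp_id"
| "mp_pow A (Suc t) = mp_mult (mp_pow A t) A"

definition arc :: "('n::finite) mpmat \<Rightarrow> 'n \<Rightarrow> 'n \<Rightarrow> bool" where
  "arc A i j \<longleftrightarrow> A i j \<noteq> -\<infinity>"

definition walk :: "('n::finite) mpmat \<Rightarrow> 'n list \<Rightarrow> bool" where
  "walk A w \<longleftrightarrow> w \<noteq> [] \<and> (\<forall>k < length w - 1. arc A (w ! k) (w ! Suc k))"

definition wlen :: "'a list \<Rightarrow> nat" where
  "wlen w = length w - 1"

definition weight :: "('n::finite) mpmat \<Rightarrow> 'n list \<Rightarrow> ereal" where
  "weight A w = (\<Sum>k < length w - 1. A (w ! k) (w ! Suc k))"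

definition cycle :: "('n::finite) mpmat \<Rightarrow> 'n list \<Rightarrow> bool" where
  "cycle A c \<longleftrightarrow> walk A c \<and> length c \<ge> 2 \<and> hd c = last c \<and> distinct (butlast c)"

definition cmean :: "('n::finite) mpmat \<Rightarrow> 'n list \<Rightarrow> ereal" where
  "cmean A c = weight A c / ereal (real (wlen c))"

definition lam :: "('n::finite) mpmat \<Rightarrow> ereal" where
  "lam A = Sup {cmean A c | c. cycle A c}"

definition crit_cycle :: "('n::finite) mpmat \<Rightarrow> 'n list \<Rightarrow> bool" where
  "crit_cycle A c \<longleftrightarrow> cycle A c \<and> cmean A c = lam A"

definition crit_node :: "('n::finite) mpmat \<Rightarrow> 'n \<Rightarrow> bool" where
  "crit_node A i \<longleftrightarrow> (\<exists>c. crit_cycle A c \<and> i \<in> set c)"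

definition crit_arc :: "('n::finite) mpmat \<Rightarrow> 'n \<Rightarrow> 'n \<Rightarrow> bool" where
  "crit_arc A i j \<longleftrightarrow> (\<exists>c. crit_cycle A c \<and> (\<exists>k < length c - 1. c ! k = i \<and> c ! Suc k = j))"

definition ccycle :: "('n::finite) mpmat \<Rightarrow> 'n list \<Rightarrow> bool" where
  "ccycle A c \<longleftrightarrow> cycle A c \<and> (\<forall>k < length c - 1. crit_arc A (c ! k) (c ! Suc k))"

definition crit_comp :: "('n::finite) mpmat \<Rightarrow> 'n \<Rightarrow> 'n set" where
  "crit_comp A i = {j. crit_node A j \<and> (i, j) \<in> {(a, b). crit_arc A a b}\<^sup>*
                                       \<and> (j, i) \<in> {(a, b). crit_arc A a b}\<^sup>*}"

definition comp_girth :: "('n::finite) mpmat \<Rightarrow> 'n \<Rightarrow> nat" where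
  "comp_girth A i = (LEAST l. \<exists>c. ccycle A c \<and> set c \<subseteq> crit_comp A i \<and> wlen c = l)"

definition comp_period :: "('n::finite) mpmat \<Rightarrow> 'n \<Rightarrow> nat" where
  "comp_period A i = Gcd {wlen c | c. ccycle A c \<and> set c \<subseteq> crit_comp A i}"

definition girth_crit :: "('n::finite) mpmat \<Rightarrow> nat" where
  "girth_crit A = Max {comp_girth A i | i. crit_node A i}"

definition cyclicity :: "('n::finite) mpmat \<Rightarrow> nat" where
  "cyclicity A = Lcm {comp_period A i | i. crit_node A i}"

text \<open>CSR terms (for lambda(A) = 0).\<close>

definition Mmat :: "('n::finite) mpmat \<Rightarrow> 'n mpmat" where
  "Mmat A = (\<lambda>i j. Max ((\<lambda>k. mp_pow (mp_pow A (cyclicity A)) k i j) ` {..< card (UNIV :: 'n set)}))"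

definition Cmat :: "('n::finite) mpmat \<Rightarrow> 'n mpmat" where
  "Cmat A = (\<lambda>i j. if crit_node A j then Mmat A i j else -\<infinity>)"

definition Rmat :: "('n::finite) mpmat \<Rightarrow> 'n mpmat" where
  "Rmat A = (\<lambda>i j. if crit_node A i then Mmat A i j else -\<infinity>)"

definition Smat :: "('n::finite) mpmat \<Rightarrow> 'n mpmat" where
  "Smat A = (\<lambda>i j. if crit_arc A i j then A i j else -\<infinity>)"

definition CSR :: "('n::finite) mpmat \<Rightarrow> nat \<Rightarrow> 'n mpmat" where
  "CSR A t = mp_mult (mp_mult (Cmat A) (mp_pow (Smat A) t)) (Rmat A)"

definition BN :: "('n::finite) mpmat \<Rightarrow> 'n mpmat" where
  "BN A = (\<lambda>i j. if crit_node A i \<or> crit_node A j then -\<infinity> else A i j)"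

definition T1 :: "('n::finite) mpmat \<Rightarrow> nat" where
  "T1 A = (LEAST T. \<forall>t \<ge> T. mp_pow A t = mp_plus (CSR A t) (mp_pow (BN A) t))"

definition DM :: "nat \<Rightarrow> nat \<Rightarrow> int" where
  "DM g n = int g * (int n - 2) + int n"

definition walk_thru :: "('n::finite) mpmat \<Rightarrow> 'n list \<Rightarrow> 'n \<Rightarrow> 'n \<Rightarrow> 'n list \<Rightarrow> bool" where
  "walk_thru A Z u v W \<longleftrightarrow> walk A W \<and> hd W = u \<and> last W = v \<and> set W \<inter> set Z \<noteq> {}"

definition twice_optimal :: "('n::finite) mpmat \<Rightarrow> 'n list \<Rightarrow> nat \<Rightarrow> 'n list \<Rightarrow> bool" where
  "twice_optimal A Z g W \<longleftrightarrow>
     walk_thru A Z (hd W) (last W) W \<and>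
     (\<forall>V. walk_thru A Z (hd W) (last W) V \<and> wlen V mod g = wlen W mod g
          \<longrightarrow> weight A V \<le> weight A W) \<and>
     (\<forall>V. walk_thru A Z (hd W) (last W) V \<and> wlen V mod g = wlen W mod g
          \<and> weight A V = weight A W \<longrightarrow> wlen W \<le> wlen V)"

definition interesting :: "('n::finite) mpmat \<Rightarrow> 'n list \<Rightarrow> nat \<Rightarrow> 'n list \<Rightarrow> bool" where
  "interesting A Z g W \<longleftrightarrow> twice_optimal A Z g W \<and>
     int (wlen W) = DM g (card (UNIV :: 'n set)) + int g - 1"

end

theory Submission
  imports Defs
begin

text \<open>Since \<open>\<lambda>(A) = 0\<close>, closed walks have nonpositive weight, so cutting closed subwalks out of the
  twice optimal walk W never lowers its weight. Among g pairwise disjoint closed subwalks some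
  nonempty subfamily has total length divisible by g (pigeonhole on prefix sums); if cutting it
  leaves a visit of \<open>Z\<^sub>0\<close>, the result is a strictly shorter walk through \<open>Z\<^sub>0\<close> of the same length
  modulo g and at least the same weight, contradicting twice optimality.

  Applied to the returns of W to a node, this allows at most g + 1 visits of every node and at
  most g visits of a node of \<open>Z\<^sub>0\<close>. The length \<open>DM(g,n) + g - 1\<close> of an interesting walk is exactly
  the sum of these bounds, so i is visited g times and j is visited g + 1 times. The same
  argument shows that every visit of i lies strictly inside a return to j and that no return to
  j contains two visits of i; counting then puts exactly one visit of i into each of the g
  returns to j, which is the interleaving.\<close>

lemma weight_singleton [simp]: "weight A [x] = 0"
  by (simp add: weight_def)

lemma weight_Cons_Cons [simp]: "weight A (x # y # zs) = A x y + weight A (y # zs)"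
  unfolding weight_def by (simp add: sum.lessThan_Suc_shift del: sum.lessThan_Suc)

lemma walk_singleton [simp]: "walk A [x]"
  by (simp add: walk_def)

lemma walk_Cons_Cons [simp]: "walk A (x # y # zs) \<longleftrightarrow> arc A x y \<and> walk A (y # zs)"
  unfolding walk_def by (auto simp: less_Suc_eq_0_disj)

lemma walk_append_Cons: "walk A (xs @ y # ys) \<longleftrightarrow> walk A (xs @ [y]) \<and> walk A (y # ys)"
  by (induction xs rule: induct_list012) auto

lemma weight_append_Cons: "weight A (xs @ y # ys) = weight A (xs @ [y]) + weight A (y # ys)"
  by (induction xs rule: induct_list012) (auto simp: add.assoc)

lemma walk_split_loop:
  "walk A (P @ x # M @ x # S) \<longleftrightarrow> walk A (P @ x # S) \<and> walk A (x # M @ [x])"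
  using walk_append_Cons[of A P x "M @ x # S"] walk_append_Cons[of A "x # M" x S]
    walk_append_Cons[of A P x S] by auto

lemma weight_split_loop:
  "weight A (P @ x # M @ x # S) = weight A (P @ x # S) + weight A (x # M @ [x])"
  using weight_append_Cons[of A P x "M @ x # S"] weight_append_Cons[of A "x # M" x S]
    weight_append_Cons[of A P x S] by (simp add: ac_simps)

lemma cycle_weight_nonpos:
  assumes "lam A = 0" and "cycle A c"
  shows "weight A c \<le> 0"
proof -
  have "cmean A c \<le> lam A"
    unfolding lam_def using assms(2) by (blast intro: Sup_upper)
  then have mean: "weight A c / ereal (real (wlen c)) \<le> 0"
    using assms(1) by (simp add: cmean_def)
  have "real (wlen c) > 0"
    using assms(2) by (auto simp: cycle_def wlen_def)
  with mean show ?thesis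
    by (cases "weight A c") (auto simp: divide_le_0_iff)
qed

lemma closed_walk_weight_nonpos:
  assumes cycles: "\<And>c. cycle A c \<Longrightarrow> weight A c \<le> 0"
    and "walk A c" and "hd c = last c"
  shows "weight A c \<le> 0"
  using assms(2,3)
proof (induction "length c" arbitrary: c rule: less_induct)
  case less
  have "c \<noteq> []"
    using less.prems by (simp add: walk_def)
  show ?case
  proof (cases "length c < 2")
    case True
    with \<open>c \<noteq> []\<close> have "c = [hd c]"
      by (cases c) auto
    then show ?thesis
      by (metis order.refl weight_singleton)
  next
    case False
    show ?thesis
    proof (cases "distinct (butlast c)")
      case True
      with False less.prems show ?thesis
        by (intro cycles) (simp add: cycle_def)
    next
      case False
      then obtain P x M S where "butlast c = P @ [x] @ M @ [x] @ S"
        using not_distinct_decomp by blast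
      moreover obtain l where "l = last c"
        by simp
      ultimately have c: "c = P @ x # M @ x # S @ [l]"
        using \<open>c \<noteq> []\<close> by (metis append.assoc append_Cons append_Nil append_butlast_last_id)
      have walks: "walk A (P @ x # S @ [l])" "walk A (x # M @ [x])"
        using less.prems(1) c walk_split_loop by metis+
      have "length (P @ x # S @ [l]) < length c" "length (x # M @ [x]) < length c"
        by (simp_all add: c)
      moreover have "hd (P @ x # S @ [l]) = last (P @ x # S @ [l])"
        using less.prems(2) c by (cases P) auto
      ultimately have "weight A (P @ x # S @ [l]) \<le> 0" "weight A (x # M @ [x]) \<le> 0"
        using less.hyps walks by auto
      then show ?thesis
        using weight_split_loop c by (metis add_nonpos_nonpos)
    qed
  qed
qed

lemma card_set_cycle:
  assumes "cycle A c"
  shows "card (set c) = wlen c"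
proof -
  obtain x xs where c: "c = x # xs" "xs \<noteq> []"
    using assms by (cases c; cases "tl c") (auto simp: cycle_def)
  then have "last c = x" "x \<in> set (butlast c)"
    using assms by (auto simp: cycle_def)
  then have "set c = set (butlast c)"
    using c(1) append_butlast_last_id[of c] by (metis insert_absorb list.distinct(1) set_append
        Un_insert_right empty_set list.set(2) sup_bot.right_neutral)
  then show ?thesis
    using assms distinct_card[of "butlast c"] by (simp add: cycle_def wlen_def)
qed

section \<open>Cutting loops out of a walk\<close>

lemma take_drop_loop_decomp:
  assumes "b < c" "c < length W"
  shows "W = take b W @ W ! b # take (c - Suc b) (drop (Suc b) W) @ W ! c # drop (Suc c) W"
proof -
  have "drop (c - Suc b) (drop (Suc b) W) = W ! c # drop (Suc c) W"
    using assms by (simp add: Cons_nth_drop_Suc)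
  then have "drop (Suc b) W = take (c - Suc b) (drop (Suc b) W) @ W ! c # drop (Suc c) W"
    by (metis append_take_drop_id)
  moreover have "W = take b W @ W ! b # drop (Suc b) W"
    using assms by (simp add: id_take_nth_drop)
  ultimately show ?thesis
    by metis
qed

lemma drop_loop:
  assumes closed: "\<And>c. walk A c \<Longrightarrow> hd c = last c \<Longrightarrow> weight A c \<le> 0"
    and "walk A W" "b < c" "c < length W" "W ! b = W ! c"
  shows "walk A (take b W @ drop c W)" "weight A W \<le> weight A (take b W @ drop c W)"
proof -
  define P M S where "P = take b W" "M = take (c - Suc b) (drop (Suc b) W)" "S = drop (Suc c) W"
  have W: "W = P @ W ! b # M @ W ! b # S"
    using take_drop_loop_decomp[OF assms(3,4)] assms(5) unfolding P_M_S_def by simp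
  have short: "take b W @ drop c W = P @ W ! b # S"
    using assms(4,5) unfolding P_M_S_def by (simp add: Cons_nth_drop_Suc)
  have "walk A (W ! b # M @ [W ! b])"
    using assms(2) W walk_split_loop by metis
  then have "weight A (W ! b # M @ [W ! b]) \<le> 0"
    by (intro closed) auto
  then have "weight A (P @ W ! b # S) + weight A (W ! b # M @ [W ! b]) \<le> weight A (P @ W ! b # S)"
    using add_left_mono by fastforce
  then show "weight A W \<le> weight A (take b W @ drop c W)"
    using weight_split_loop W short by metis
  show "walk A (take b W @ drop c W)"
    using assms(2) W walk_split_loop short by metis
qed

text \<open>F indexes the closed subwalks W[a..e a]; two of them overlap at most in an endpoint.\<close>

definition loop_family :: "'a list \<Rightarrow> nat set \<Rightarrow> (nat \<Rightarrow> nat) \<Rightarrow> bool" where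
  "loop_family W F e \<longleftrightarrow> finite F
     \<and> (\<forall>a\<in>F. a < e a \<and> e a < length W \<and> W ! a = W ! e a)
     \<and> (\<forall>a\<in>F. \<forall>a'\<in>F. a < a' \<longrightarrow> e a \<le> a')"

lemma loop_family_subset: "loop_family W F e \<Longrightarrow> J \<subseteq> F \<Longrightarrow> loop_family W J e"
  unfolding loop_family_def by (meson finite_subset subsetD)

lemma remove_loops:
  assumes closed: "\<And>c. walk A c \<Longrightarrow> hd c = last c \<Longrightarrow> weight A c \<le> 0"
    and "loop_family W F e" "walk A W" "p0 < length W" "p0 \<notin> (\<Union>a\<in>F. {a..<e a})"
  shows "\<exists>V. walk A V \<and> hd V = hd W \<and> last V = last W \<and> weight A W \<le> weight A V
           \<and> length V + (\<Sum>a\<in>F. e a - a) = length W \<and> W ! p0 \<in> set V"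
proof -
  have "finite F"
    using assms(2) by (simp add: loop_family_def)
  then show ?thesis
    using assms(2-)
  proof (induction F arbitrary: W p0 rule: finite_linorder_max_induct)
    case empty
    then show ?case
      by (intro exI[of _ W]) auto
  next
    case (insert b F)
    define c where "c = e b"
    define V1 where "V1 = take b W @ drop c W"
    have bc: "b < c" "c < length W" "W ! b = W ! c"
      using insert.prems(1) unfolding c_def loop_family_def by auto
    have len: "length V1 = b + (length W - c)"
      unfolding V1_def using bc by simp
    have nth_left: "V1 ! k = W ! k" if "k < b" for k
      unfolding V1_def using that bc by (simp add: nth_append)
    have nth_right: "V1 ! k = W ! (k - b + c)" if "b \<le> k" "k < length V1" for k
      unfolding V1_def using that bc by (simp add: nth_append add.commute)
    have F_before_b: "e a \<le> b" if "a \<in> F" for a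
      using insert.prems(1) insert.hyps(2) that unfolding loop_family_def by auto
    have "a < e a \<and> e a < length V1 \<and> V1 ! a = V1 ! e a" if a: "a \<in> F" for a
    proof -
      have "V1 ! e a = W ! e a"
        using F_before_b[OF a] nth_left nth_right[of b] len bc by (cases "e a < b") auto
      then show ?thesis
        using insert.prems(1) a F_before_b[OF a] nth_left len bc unfolding loop_family_def by auto
    qed
    then have family: "loop_family V1 F e"
      using insert.hyps(1) insert.prems(1) unfolding loop_family_def by blast
    define p1 where "p1 = (if p0 < b then p0 else p0 - (c - b))"
    have p0_outside: "\<not> (b \<le> p0 \<and> p0 < c)"
      using insert.prems(4) c_def by auto
    then have p1: "p1 < length V1" "V1 ! p1 = W ! p0"
      using insert.prems(3) len nth_left nth_right[of p1] bc unfolding p1_def by auto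
    have "p1 \<notin> {a..<e a}" if a: "a \<in> F" for a
    proof (cases "p0 < b")
      case True
      then show ?thesis
        using insert.prems(4) a unfolding p1_def by auto
    next
      case False
      then have "b \<le> p1"
        using p0_outside unfolding p1_def by auto
      then show ?thesis
        using F_before_b[OF a] by auto
    qed
    then have p1_outside: "p1 \<notin> (\<Union>a\<in>F. {a..<e a})"
      by blast
    have walk_V1: "walk A V1" and heavier: "weight A W \<le> weight A V1"
      using drop_loop[OF closed insert.prems(2) bc] unfolding V1_def by auto
    obtain V where V: "walk A V" "hd V = hd V1" "last V = last V1"
        "weight A V1 \<le> weight A V" "length V + (\<Sum>a\<in>F. e a - a) = length V1" "V1 ! p1 \<in> set V"
      using insert.IH[OF family walk_V1 p1(1) p1_outside] by blast
    have "V1 ! 0 = W ! 0"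
      using nth_left[of 0] nth_right[of 0] len bc by (cases "b = 0") auto
    moreover have "V1 \<noteq> []" "W \<noteq> []"
      using len bc by auto
    ultimately have "hd V1 = hd W"
      by (simp add: hd_conv_nth)
    moreover have "last V1 = last W"
      unfolding V1_def using bc by simp
    moreover have "b \<notin> F"
      using insert.hyps(2) by blast
    then have "(\<Sum>a\<in>insert b F. e a - a) = (c - b) + (\<Sum>a\<in>F. e a - a)"
      using insert.hyps(1) c_def by simp
    ultimately show ?case
      using V p1 len bc heavier order_trans
      by (intro exI[of _ V]) auto
  qed
qed

lemma subset_sum_dvd:
  fixes f :: "'a \<Rightarrow> nat"
  assumes "finite F" "g \<le> card F" "0 < g"
  shows "\<exists>J\<subseteq>F. J \<noteq> {} \<and> g dvd (\<Sum>a\<in>J. f a)"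
proof -
  obtain xs where xs: "set xs = F" "distinct xs"
    using assms(1) finite_distinct_list by blast
  define s where "s k = (\<Sum>i<k. f (xs ! i)) mod g" for k
  have "card (s ` {..g}) \<le> card {..<g}"
    using assms(3) by (intro card_mono) (auto simp: s_def)
  then have "card (s ` {..g}) < card {..g}"
    by simp
  then have "\<not> inj_on s {..g}"
    using pigeonhole by blast
  then obtain u v where uv: "u < v" "v \<le> g" "s u = s v"
    unfolding inj_on_def by (metis atMost_iff linorder_neqE_nat)
  define J where "J = (\<lambda>i. xs ! i) ` {u..<v}"
  have len: "g \<le> length xs"
    using assms(2) xs distinct_card by metis
  have "inj_on (\<lambda>i. xs ! i) {u..<v}"
    using xs(2) uv(2) len by (intro inj_on_nth) auto
  then have "(\<Sum>a\<in>J. f a) = (\<Sum>i\<in>{u..<v}. f (xs ! i))"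
    unfolding J_def by (simp add: sum.reindex)
  moreover have "(\<Sum>i<v. f (xs ! i)) = (\<Sum>i<u. f (xs ! i)) + (\<Sum>i\<in>{u..<v}. f (xs ! i))"
    using uv(1) by (simp add: atLeast0LessThan[symmetric] sum.atLeastLessThan_concat)
  ultimately have "g dvd (\<Sum>a\<in>J. f a)"
    using uv(3) unfolding s_def by (metis mod_eq_dvd_iff_nat le_add1 add_diff_cancel_left')
  moreover have "J \<subseteq> F" "J \<noteq> {}"
    unfolding J_def using xs(1) uv len by auto
  ultimately show ?thesis
    by blast
qed

lemma card_eq_1_if_no_two:
  fixes R :: "'a::linorder set"
  assumes "R \<noteq> {}" and "\<And>r s. r \<in> R \<Longrightarrow> s \<in> R \<Longrightarrow> r < s \<Longrightarrow> False"
  shows "card R = 1"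
proof -
  obtain r where "r \<in> R"
    using assms(1) by blast
  moreover have "s = r" if "s \<in> R" for s
    using assms(2) \<open>r \<in> R\<close> that by (metis linorder_neqE)
  ultimately have "R = {r}"
    by blast
  then show ?thesis
    by simp
qed

section \<open>Occurrences of a node in a list\<close>

definition occs :: "'a list \<Rightarrow> 'a \<Rightarrow> nat set" where
  "occs W x = {p. p < length W \<and> W ! p = x}"

definition returns :: "'a list \<Rightarrow> 'a \<Rightarrow> nat set" where
  "returns W x = {p \<in> occs W x. \<exists>q\<in>occs W x. p < q}"

definition next_occ :: "'a list \<Rightarrow> 'a \<Rightarrow> nat \<Rightarrow> nat" where
  "next_occ W x p = Min {q \<in> occs W x. p < q}"

lemma finite_occs [simp]: "finite (occs W x)"
  by (simp add: occs_def)

lemma card_occs: "card (occs W x) = count_list W x"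
proof (induction W rule: rev_induct)
  case (snoc y W)
  have "occs (W @ [y]) x = occs W x \<union> (if y = x then {length W} else {})"
    by (auto simp: occs_def nth_append less_Suc_eq)
  then show ?case
    using snoc by (auto simp: occs_def)
qed (simp add: occs_def)

lemma next_occ:
  assumes "a \<in> returns W x"
  shows "next_occ W x a \<in> occs W x" "a < next_occ W x a"
proof -
  have "next_occ W x a \<in> {q \<in> occs W x. a < q}"
    unfolding next_occ_def using assms by (intro Min_in) (auto simp: returns_def)
  then show "next_occ W x a \<in> occs W x" "a < next_occ W x a"
    by auto
qed

lemma next_occ_le: "r \<in> occs W x \<Longrightarrow> a < r \<Longrightarrow> next_occ W x a \<le> r"
  unfolding next_occ_def by (intro Min_le) auto

lemma loop_family_returns: "loop_family W (returns W x) (next_occ W x)"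
proof -
  have "a < next_occ W x a \<and> next_occ W x a < length W \<and> W ! a = W ! next_occ W x a"
    if "a \<in> returns W x" for a
    using next_occ[OF that] that by (auto simp: returns_def occs_def)
  moreover have "next_occ W x a \<le> a'" if "a' \<in> returns W x" "a < a'" for a a'
    using that by (intro next_occ_le) (auto simp: returns_def)
  ultimately show ?thesis
    unfolding loop_family_def by (simp add: returns_def)
qed

lemma returns_eq: "returns W x = occs W x - {Max (occs W x)}"
proof (intro set_eqI iffI)
  fix p assume "p \<in> returns W x"
  then obtain q where "p \<in> occs W x" "q \<in> occs W x" "p < q"
    by (auto simp: returns_def)
  moreover have "q \<le> Max (occs W x)"
    using \<open>q \<in> occs W x\<close> by simp
  then have "p \<noteq> Max (occs W x)"
    using \<open>p < q\<close> by (metis leD)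
  then show "p \<in> occs W x - {Max (occs W x)}"
    using \<open>p \<in> occs W x\<close> by blast
next
  fix p assume p: "p \<in> occs W x - {Max (occs W x)}"
  then have "Max (occs W x) \<in> occs W x"
    by (intro Max_in) auto
  moreover have "p \<le> Max (occs W x)"
    using p by (intro Max_ge) auto
  then have "p < Max (occs W x)"
    using p by (metis DiffE singletonI le_neq_implies_less)
  ultimately show "p \<in> returns W x"
    using p by (auto simp: returns_def)
qed

lemma card_returns: "card (returns W x) = card (occs W x) - 1"
  by (cases "occs W x = {}") (simp_all add: returns_eq card_Diff_singleton)

lemma return_covering_unique:
  assumes "a \<in> returns W x" "a' \<in> returns W x"
    and "p \<in> {a..<next_occ W x a}" "p \<in> {a'..<next_occ W x a'}"
  shows "a = a'"
  using assms next_occ_le[of a' W x a] next_occ_le[of a W x a'] returns_def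
  by (metis (no_types, lifting) atLeastLessThan_iff linorder_neqE_nat mem_Collect_eq not_le order.trans)

section \<open>Twice optimal walks\<close>

locale twice_optimal_walk =
  fixes A :: "('n::finite) mpmat" and Z :: "'n list" and g :: nat and W :: "'n list"
  assumes closed_walk_nonpos: "\<And>c. walk A c \<Longrightarrow> hd c = last c \<Longrightarrow> weight A c \<le> 0"
    and twice_opt: "twice_optimal A Z g W"
    and period_pos: "0 < g"
begin

lemma walk_W: "walk A W"
  using twice_opt by (simp add: twice_optimal_def walk_thru_def)

lemma meets_Z: "\<exists>p<length W. W ! p \<in> set Z"
  using twice_opt by (auto simp: twice_optimal_def walk_thru_def in_set_conv_nth)

lemma loop_family_card_lt:
  assumes family: "loop_family W F e"
    and uncovered: "\<And>J. J \<subseteq> F \<Longrightarrow> J \<noteq> {} \<Longrightarrow>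
                       \<exists>p0<length W. W ! p0 \<in> set Z \<and> p0 \<notin> (\<Union>a\<in>J. {a..<e a})"
  shows "card F < g"
proof (rule ccontr)
  assume "\<not> card F < g"
  moreover have "finite F"
    using family by (simp add: loop_family_def)
  ultimately obtain J where J: "J \<subseteq> F" "J \<noteq> {}" "g dvd (\<Sum>a\<in>J. e a - a)"
    using subset_sum_dvd[of F g "\<lambda>a. e a - a"] period_pos by auto
  obtain p0 where p0: "p0 < length W" "W ! p0 \<in> set Z" "p0 \<notin> (\<Union>a\<in>J. {a..<e a})"
    using uncovered[OF J(1,2)] by blast
  obtain V where V: "walk A V" "hd V = hd W" "last V = last W" "weight A W \<le> weight A V"
      "length V + (\<Sum>a\<in>J. e a - a) = length W" "W ! p0 \<in> set V"
    using remove_loops[OF closed_walk_nonpos loop_family_subset[OF family J(1)] walk_W p0(1,3)]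
    by blast
  have "0 < (\<Sum>a\<in>J. e a - a)"
    using family J(1,2) loop_family_subset[OF family J(1)]
    by (intro sum_pos) (auto simp: loop_family_def)
  moreover have "0 < length V"
    using V(1) by (simp add: walk_def)
  ultimately have shorter: "wlen V < wlen W" and "wlen W = wlen V + (\<Sum>a\<in>J. e a - a)"
    using V(5) unfolding wlen_def by linarith+
  then have same_residue: "wlen V mod g = wlen W mod g"
    using J(3) by (simp add: mod_add_right_eq[symmetric])
  have "walk_thru A Z (hd W) (last W) V"
    unfolding walk_thru_def using V p0(2) by blast
  then have "weight A V \<le> weight A W" "weight A V = weight A W \<longrightarrow> wlen W \<le> wlen V"
    using twice_opt same_residue unfolding twice_optimal_def by blast+
  then show False
    using V(4) shorter by auto
qed

lemma uncovered_returns_card_lt: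
  assumes "p0 < length W" "W ! p0 \<in> set Z"
  shows "card {a \<in> returns W x. p0 \<notin> {a..<next_occ W x a}} < g"
  using assms
  by (intro loop_family_card_lt[OF loop_family_subset[OF loop_family_returns]]) auto

lemma card_occs_le: "card (occs W x) \<le> g + 1"
proof -
  obtain p0 where p0: "p0 < length W" "W ! p0 \<in> set Z"
    using meets_Z by blast
  let ?covering = "{a \<in> returns W x. p0 \<in> {a..<next_occ W x a}}"
  have "card ?covering \<le> 1"
    by (auto simp: card_le_Suc0_iff_eq intro: return_covering_unique[of _ W x _ p0])
  moreover have "returns W x = {a \<in> returns W x. p0 \<notin> {a..<next_occ W x a}} \<union> ?covering"
    by auto
  then have "card (returns W x) \<le> card {a \<in> returns W x. p0 \<notin> {a..<next_occ W x a}} + card ?covering"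
    by (metis card_Un_le)
  ultimately show ?thesis
    using uncovered_returns_card_lt[OF p0, of x] card_returns[of W x] by linarith
qed

lemma card_occs_le_Z:
  assumes "x \<in> set Z"
  shows "card (occs W x) \<le> g"
proof (cases "occs W x = {}")
  case False
  define p0 where "p0 = Max (occs W x)"
  have p0: "p0 \<in> occs W x"
    using False unfolding p0_def by (intro Max_in) auto
  have "next_occ W x a \<le> p0" if "a \<in> returns W x" for a
    using next_occ[OF that] unfolding p0_def by (intro Max_ge) auto
  then have "{a \<in> returns W x. p0 \<notin> {a..<next_occ W x a}} = returns W x"
    by fastforce
  then have "card (returns W x) < g"
    using uncovered_returns_card_lt[of p0 x] p0 assms by (auto simp: occs_def)
  then show ?thesis
    using card_returns[of W x] by linarith
qed (simp add: period_pos)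

lemma card_occs_eq:
  assumes "card (set Z) = g" and "length W = g * card (UNIV :: 'n set) + (card (UNIV :: 'n set) - g)"
  shows "card (occs W x) = (if x \<in> set Z then g else g + 1)"
proof (rule sum_mono_inv[where f = "\<lambda>x. card (occs W x)" and I = UNIV])
  have "g \<le> card (UNIV :: 'n set)"
    using assms(1) card_mono[of UNIV "set Z"] by simp
  have "card (- set Z) = card (UNIV :: 'n set) - g"
    using assms(1) by (simp add: Compl_eq_Diff_UNIV card_Diff_subset)
  then have "(\<Sum>x\<in>UNIV. if x \<in> set Z then g else g + 1)
      = g * g + (g + 1) * (card (UNIV :: 'n set) - g)"
    using assms(1) by (simp add: sum.If_cases)
  also have "\<dots> = g * card (UNIV :: 'n set) + (card (UNIV :: 'n set) - g)"
    using \<open>g \<le> card (UNIV :: 'n set)\<close> by (auto simp: algebra_simps dest: le_Suc_ex)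
  also have "\<dots> = (\<Sum>x\<in>UNIV. card (occs W x))"
    using assms(2) by (simp add: card_occs sum_count_set)
  finally show "(\<Sum>x\<in>UNIV. card (occs W x)) = (\<Sum>x\<in>UNIV. if x \<in> set Z then g else g + 1)" ..
qed (use card_occs_le card_occs_le_Z in auto)

lemma return_covers:
  assumes "card (occs W x) = g + 1" "p0 < length W" "W ! p0 \<in> set Z" "W ! p0 \<noteq> x"
  shows "\<exists>a\<in>returns W x. a < p0 \<and> p0 < next_occ W x a"
proof -
  have "card {a \<in> returns W x. p0 \<notin> {a..<next_occ W x a}} < card (returns W x)"
    using uncovered_returns_card_lt[OF assms(2,3)] assms(1) card_returns[of W x] by simp
  then have "{a \<in> returns W x. p0 \<notin> {a..<next_occ W x a}} \<noteq> returns W x"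
    by (metis less_irrefl)
  then obtain a where a: "a \<in> returns W x" "a \<le> p0" "p0 < next_occ W x a"
    by auto
  moreover have "a \<noteq> p0"
    using a(1) assms(4) by (auto simp: returns_def occs_def)
  ultimately show ?thesis
    using le_neq_implies_less by blast
qed

lemma return_holds_no_two_occs:
  assumes card_x: "card (occs W x) = g + 1" and a: "a \<in> returns W x"
    and pq: "a < p" "p < q" "q < next_occ W x a" "W ! p = W ! q" "W ! q \<in> set Z"
  shows False
proof -
  txt \<open>Trading the return at a for the shorter loop from p to q keeps g disjoint loops, and cutting
    any of them still leaves a visit of Z: q if the new loop is cut, p otherwise.\<close>
  define G where "G = insert p (returns W x - {a})"
  define e where "e = (next_occ W x)(p := q)"
  have q_len: "q < length W"
    using next_occ(1)[OF a] pq(3) by (auto simp: occs_def)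
  have outside: "p \<notin> {a'..<next_occ W x a'}" "q \<notin> {a'..<next_occ W x a'}"
    if "a' \<in> returns W x - {a}" for a'
    using return_covering_unique[OF a, of a' p] return_covering_unique[OF a, of a' q] pq(1-3) that
    by auto
  have "p \<notin> returns W x"
  proof
    assume "p \<in> returns W x"
    then have "next_occ W x a \<le> p"
      using next_occ_le[of p W x a] pq(1) by (auto simp: returns_def)
    then show False
      using pq(2,3) by simp
  qed
  moreover have "finite (returns W x)"
    by (simp add: returns_eq)
  moreover have "card (returns W x - {a}) = g - 1"
    using card_x a \<open>finite (returns W x)\<close> by (simp add: card_returns card_Diff_singleton)
  ultimately have "card G = g"
    using period_pos unfolding G_def by simp
  have returns_family: "loop_family W (returns W x) (next_occ W x)"
    by (rule loop_family_returns)
  have loops: "a' < e a' \<and> e a' < length W \<and> W ! a' = W ! e a'" if "a' \<in> G" for a'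
    using that returns_family pq q_len unfolding G_def e_def loop_family_def by auto
  have ordered: "e a1 \<le> a2" if a12: "a1 \<in> G" "a2 \<in> G" "a1 < a2" for a1 a2
  proof -
    consider "a1 = p" | "a2 = p" | "a1 \<in> returns W x - {a}" "a2 \<in> returns W x - {a}" "a1 \<noteq> p"
      using a12 unfolding G_def by blast
    then show ?thesis
    proof cases
      case 1
      then have "next_occ W x a \<le> a2"
        using returns_family a12 a pq(1) unfolding G_def loop_family_def by auto
      then show ?thesis
        using 1 pq(3) unfolding e_def by simp
    next
      case 2
      then show ?thesis
        using outside(1)[of a1] a12 unfolding G_def e_def by auto
    qed (use returns_family a12 in \<open>auto simp: e_def loop_family_def\<close>)
  qed
  have "finite G"
    by (simp add: G_def returns_eq)
  then have "loop_family W G e"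
    using loops ordered unfolding loop_family_def by blast
  moreover have "\<exists>p0<length W. W ! p0 \<in> set Z \<and> p0 \<notin> (\<Union>a'\<in>J. {a'..<e a'})"
    if "J \<subseteq> G" for J
  proof (cases "p \<in> J")
    case True
    have "q \<notin> {a'..<e a'}" if "a' \<in> J" for a'
      using outside(2)[of a'] \<open>J \<subseteq> G\<close> that unfolding G_def e_def by (cases "a' = p") auto
    then show ?thesis
      using q_len pq(5) by blast
  next
    case False
    have "p \<notin> {a'..<e a'}" if "a' \<in> J" for a'
      using outside(1)[of a'] \<open>J \<subseteq> G\<close> that False unfolding G_def e_def by auto
    then show ?thesis
      using q_len pq(2,4,5) by (metis UN_E order.strict_trans)
  qed
  ultimately have "card G < g"
    by (rule loop_family_card_lt)
  then show False
    using \<open>card G = g\<close> by simp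
qed

context
  fixes x y :: 'n
  assumes x_in_Z: "x \<in> set Z" and card_x: "card (occs W x) = g"
    and card_y: "card (occs W y) = g + 1"
begin

lemma occ_in_return:
  assumes "p \<in> occs W x"
  shows "\<exists>a\<in>returns W y. a < p \<and> p < next_occ W y a"
proof -
  have "y \<notin> set Z"
    using card_occs_le_Z[of y] card_y by auto
  then show ?thesis
    using return_covers[OF card_y] assms x_in_Z by (auto simp: occs_def)
qed

lemma return_contains_occ:
  assumes "a \<in> returns W y"
  shows "\<exists>r\<in>occs W x. a < r \<and> r < next_occ W y a"
proof -
  define ret where "ret p = (SOME a. a \<in> returns W y \<and> a < p \<and> p < next_occ W y a)" for p
  have ret: "ret p \<in> returns W y" "ret p < p" "p < next_occ W y (ret p)" if "p \<in> occs W x" for p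
    using someI_ex[OF occ_in_return[OF that, unfolded Bex_def]] unfolding ret_def by blast+
  have "p = p'" if "p \<in> occs W x" "p' \<in> occs W x" "ret p = ret p'" "p \<le> p'" for p p'
  proof (rule ccontr)
    assume "p \<noteq> p'"
    then show False
      using return_holds_no_two_occs[OF card_y ret(1)[of p], of p p'] ret[of p] ret[of p'] that x_in_Z
      by (auto simp: occs_def)
  qed
  then have "inj_on ret (occs W x)"
    by (metis inj_onI nle_le)
  moreover have "ret ` occs W x \<subseteq> returns W y"
    using ret(1) by blast
  moreover have "card (ret ` occs W x) = card (returns W y)"
    using \<open>inj_on ret (occs W x)\<close> card_x card_y by (simp add: card_image card_returns)
  ultimately have "ret ` occs W x = returns W y"
    by (intro card_subset_eq) (simp_all add: returns_eq)
  then obtain p where "p \<in> occs W x" "a = ret p"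
    using assms by blast
  then show ?thesis
    using ret by blast
qed

lemma occs_x_separate_occs_y:
  assumes "a \<in> occs W y" "b \<in> occs W y" "a < b"
  shows "\<exists>r\<in>occs W x. a < r \<and> r < b"
proof -
  have "a \<in> returns W y"
    using assms by (auto simp: returns_def)
  then obtain r where "r \<in> occs W x" "a < r" "r < next_occ W y a"
    using return_contains_occ by blast
  moreover have "next_occ W y a \<le> b"
    using next_occ_le[OF assms(2,3)] .
  ultimately show ?thesis
    by auto
qed

lemma occs_y_separate_occs_x:
  assumes "p \<in> occs W x" "q \<in> occs W x" "p < q"
  shows "\<exists>r\<in>occs W y. p < r \<and> r < q"
proof -
  obtain a where a: "a \<in> returns W y" "a < p" "p < next_occ W y a"
    using occ_in_return assms(1) by blast
  have "W ! p = W ! q" "W ! q \<in> set Z"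
    using assms x_in_Z by (auto simp: occs_def)
  then have "next_occ W y a \<le> q"
    using return_holds_no_two_occs[OF card_y a(1,2) assms(3)] by (meson not_le)
  moreover have "x \<noteq> y"
    using card_x card_y by auto
  then have "next_occ W y a \<noteq> q"
    using next_occ(1)[OF a(1)] assms(2) by (auto simp: occs_def)
  ultimately show ?thesis
    using next_occ(1)[OF a(1)] a(3) by auto
qed

lemma interleaving:
  "(\<forall>p q. p < q \<and> q < length W \<and> W ! p = x \<and> W ! q = x
          \<and> (\<forall>r. p < r \<and> r < q \<longrightarrow> W ! r \<noteq> x)
        \<longrightarrow> card {r. p < r \<and> r < q \<and> W ! r = y} = 1)
   \<and> (\<forall>p. p < length W \<and> W ! p = x \<and> (\<forall>r < p. W ! r \<noteq> x)
        \<longrightarrow> card {r. r < p \<and> W ! r = y} = 1)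
   \<and> (\<forall>q. q < length W \<and> W ! q = x \<and> (\<forall>r. q < r \<and> r < length W \<longrightarrow> W ! r \<noteq> x)
        \<longrightarrow> card {r. q < r \<and> r < length W \<and> W ! r = y} = 1)"
proof (intro conjI allI impI)
  fix p q
  assume pq: "p < q \<and> q < length W \<and> W ! p = x \<and> W ! q = x
    \<and> (\<forall>r. p < r \<and> r < q \<longrightarrow> W ! r \<noteq> x)"
  show "card {r. p < r \<and> r < q \<and> W ! r = y} = 1"
  proof (rule card_eq_1_if_no_two)
    show "{r. p < r \<and> r < q \<and> W ! r = y} \<noteq> {}"
      using occs_y_separate_occs_x[of p q] pq by (auto simp: occs_def)
  next
    fix r s assume "r \<in> {r. p < r \<and> r < q \<and> W ! r = y}" "s \<in> {r. p < r \<and> r < q \<and> W ! r = y}" "r < s"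
    then show False
      using occs_x_separate_occs_y[of r s] pq by (auto simp: occs_def)
  qed
next
  fix p
  assume p: "p < length W \<and> W ! p = x \<and> (\<forall>r < p. W ! r \<noteq> x)"
  show "card {r. r < p \<and> W ! r = y} = 1"
  proof (rule card_eq_1_if_no_two)
    obtain a where "a \<in> returns W y" "a < p"
      using occ_in_return[of p] p by (auto simp: occs_def)
    then show "{r. r < p \<and> W ! r = y} \<noteq> {}"
      by (auto simp: returns_def occs_def)
  next
    fix r s assume "r \<in> {r. r < p \<and> W ! r = y}" "s \<in> {r. r < p \<and> W ! r = y}" "r < s"
    then show False
      using occs_x_separate_occs_y[of r s] p by (auto simp: occs_def)
  qed
next
  fix q
  assume q: "q < length W \<and> W ! q = x \<and> (\<forall>r. q < r \<and> r < length W \<longrightarrow> W ! r \<noteq> x)"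
  show "card {r. q < r \<and> r < length W \<and> W ! r = y} = 1"
  proof (rule card_eq_1_if_no_two)
    obtain a where "a \<in> returns W y" "q < next_occ W y a"
      using occ_in_return[of q] q by (auto simp: occs_def)
    then show "{r. q < r \<and> r < length W \<and> W ! r = y} \<noteq> {}"
      using next_occ(1) by (fastforce simp: occs_def)
  next
    fix r s
    assume "r \<in> {r. q < r \<and> r < length W \<and> W ! r = y}"
      "s \<in> {r. q < r \<and> r < length W \<and> W ! r = y}" "r < s"
    then show False
      using occs_x_separate_occs_y[of r s] q by (auto simp: occs_def)
  qed
qed

end

end

theorem lemmal:
  fixes A :: "('n::finite) mpmat" and Z0 :: "'n list" and i j :: 'n and W :: "'n list"
  assumes fin: "\<forall>a b. A a b \<noteq> \<infinity>"
    and lam0: "lam A = 0"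
    and T1eq: "int (T1 A) = DM (girth_crit A) (card (UNIV :: 'n set))"
    and Z0: "ccycle A Z0" "wlen Z0 = girth_crit A"
    and Z0uniq: "\<forall>c. ccycle A c \<and> wlen c = girth_crit A \<longrightarrow>
                    (\<exists>k. butlast c = rotate k (butlast Z0))"
    and i: "i \<in> set Z0" and j: "j \<notin> set Z0"
    and W: "interesting A Z0 (girth_crit A) W"
  shows "(\<forall>p q. p < q \<and> q < length W \<and> W ! p = i \<and> W ! q = i
              \<and> (\<forall>r. p < r \<and> r < q \<longrightarrow> W ! r \<noteq> i)
            \<longrightarrow> card {r. p < r \<and> r < q \<and> W ! r = j} = 1)
       \<and> (\<forall>p. p < length W \<and> W ! p = i \<and> (\<forall>r < p. W ! r \<noteq> i)
            \<longrightarrow> card {r. r < p \<and> W ! r = j} = 1)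
       \<and> (\<forall>q. q < length W \<and> W ! q = i \<and> (\<forall>r. q < r \<and> r < length W \<longrightarrow> W ! r \<noteq> i)
            \<longrightarrow> card {r. q < r \<and> r < length W \<and> W ! r = j} = 1)"
proof -
  define g n where "g = girth_crit A" and "n = card (UNIV :: 'n set)"
  have cycle: "cycle A Z0"
    using Z0(1) by (simp add: ccycle_def)
  have card_Z0: "card (set Z0) = g"
    using card_set_cycle[OF cycle] Z0(2) by (simp add: g_def)
  have "0 < g"
    using cycle Z0(2) by (auto simp: g_def cycle_def wlen_def)
  interpret twice_optimal_walk A Z0 g W
    using closed_walk_weight_nonpos[OF cycle_weight_nonpos[OF lam0]] W \<open>0 < g\<close>
    by unfold_locales (auto simp: interesting_def g_def)
  have "g \<le> n"
    using card_Z0 card_mono[of UNIV "set Z0"] by (simp add: n_def)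
  moreover have "int (length W - 1) = int (length W) - 1"
    using walk_W by (simp add: walk_def of_nat_diff Suc_leI)
  then have "int (length W) = int g * (int n - 2) + int n + int g"
    using W unfolding interesting_def DM_def wlen_def g_def n_def by simp
  moreover obtain m where "n = g + m"
    using \<open>g \<le> n\<close> le_Suc_ex by blast
  ultimately have "int (length W) = int (g * n + (n - g))"
    by (simp add: algebra_simps)
  then have "length W = g * n + (n - g)"
    by (simp only: of_nat_eq_iff)
  then have card_i: "card (occs W i) = g" and card_j: "card (occs W j) = g + 1"
    using card_occs_eq[OF card_Z0] i j by (simp_all add: n_def)
  show ?thesis
    using interleaving[OF i card_i card_j] .
qed

end
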